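(* Let $\mathcal X$ be finite and $P_0,P_1,\hat P_0,\hat P_1$ distributions on $\mathcal X$ with full support satisfying $$0<D(P_0\|\hat P_1)-D(P_0\|\hat P_0),\qquad 0<D(P_1\|\hat P_0)-D(P_1\|\hat P_1).$$ Let $x_1,x_2,\dots$ be i.i.d. $P_0$, $\hat S_n=\sum_{i=1}^n\log\frac{\hat P_0(x_i)}{\hat P_1(x_i)}$, and for $\hat\gamma_0>0$ let $\hat\tau_0=\inf\{n\ge1:\hat S_n\ge\hat\gamma_0\}$. Define $\hat\kappa(s)=\log\mathbb E_{P_0}\big[(\hat P_1(X)/\hat P_0(X))^s\big]$, $E(0)=\sup_{s\ge0}\{-\hat\kappa(s)\}$ and let $d$ be the maximizing $s$. Then $E(0)>0$, $d>0$, and for every $n\ge1$, $$\mathbb P_0[\hat\tau_0\ge n]\le e^{d\hat\gamma_0}e^{-(n-1)E(0)}.$$ Moreover, $\hat\tau_0\to\infty$ almost surely as $\hat\gamma_0\to\infty$.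
   Context: $D$ is relative entropy; $\mathbb P_0,\mathbb E_{P_0}$ refer to i.i.d. observations with distribution $P_0$. $\hat\tau_0$ is the first time the mismatched log-likelihood ratio random walk of a sequential probability ratio test with test distributions $\hat P_0,\hat P_1$ crosses the upper threshold $\hat\gamma_0$. *)

theory Defs
  imports "HOL-Probability.Probability"
begin

definition KL :: "'a::finite pmf \<Rightarrow> 'a pmf \<Rightarrow> real" where
  "KL P Q = (\<Sum>x\<in>UNIV. pmf P x * ln (pmf P x / pmf Q x))"

text \<open>Mismatched log-likelihood ratio random walk: observation x_(i+1) is \<omega> i.\<close>
definition llr_walk :: "'a pmf \<Rightarrow> 'a pmf \<Rightarrow> nat \<Rightarrow> (nat \<Rightarrow> 'a) \<Rightarrow> real" where
  "llr_walk Q0 Q1 n \<omega> = (\<Sum>i<n. ln (pmf Q0 (\<omega> i) / pmf Q1 (\<omega> i)))"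

definition first_passage :: "'a pmf \<Rightarrow> 'a pmf \<Rightarrow> real \<Rightarrow> (nat \<Rightarrow> 'a) \<Rightarrow> enat" where
  "first_passage Q0 Q1 \<gamma> \<omega> =
     (if \<exists>n\<ge>1. llr_walk Q0 Q1 n \<omega> \<ge> \<gamma>
      then enat (LEAST n. n \<ge> 1 \<and> llr_walk Q0 Q1 n \<omega> \<ge> \<gamma>) else \<infinity>)"

definition kappa :: "'a::finite pmf \<Rightarrow> 'a pmf \<Rightarrow> 'a pmf \<Rightarrow> real \<Rightarrow> real" where
  "kappa P0 Q0 Q1 s = ln (\<Sum>x\<in>UNIV. pmf P0 x * (pmf Q1 x / pmf Q0 x) powr s)"

definition E0 :: "'a::finite pmf \<Rightarrow> 'a pmf \<Rightarrow> 'a pmf \<Rightarrow> real" where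
  "E0 P0 Q0 Q1 = (SUP s\<in>{0..}. - kappa P0 Q0 Q1 s)"

definition iid :: "'a pmf \<Rightarrow> (nat \<Rightarrow> 'a) measure" where
  "iid P = PiM UNIV (\<lambda>_. measure_pmf P)"

end

theory Submission
  imports Defs
begin

text \<open>
  Write \<open>M(s) = E[(Q1(X)/Q0(X))^s] = exp \<kappa>(s)\<close> (\<open>llr_mgf\<close>) for the moment
  generating function of \<open>-S_1\<close>. On the event \<open>\<tau> \<ge> n\<close> the walk satisfies \<open>S_(n-1) < \<gamma>\<close>, so the
  Chernoff bound and independence give \<open>P[\<tau> \<ge> n] \<le> exp(s\<gamma>) M(s)^(n-1)\<close> for every
  \<open>s > 0\<close>. The function \<open>M\<close> is continuous with \<open>M(0) = 1\<close> and
  \<open>M'(0) = D(P0||Q0) - D(P0||Q1) < 0\<close>, and it grows without bound because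
  \<open>Q1(x) > Q0(x)\<close> for some \<open>x\<close>. Hence \<open>M\<close> attains its minimum over \<open>[0,\<infinity>)\<close> at
  some \<open>d\<close> with \<open>M(d) < 1\<close>, i.e. \<open>E(0) = -ln M(d) > 0\<close>, and \<open>d > 0\<close> because
  \<open>M(0) = 1\<close>. The divergence of \<open>\<tau>\<close> is pathwise: \<open>\<tau> \<ge> N\<close> as soon as \<open>\<gamma>\<close> exceeds
  \<open>max_(k<N) S_k\<close>.
\<close>

definition llr_mgf :: "'a::finite pmf \<Rightarrow> 'a pmf \<Rightarrow> 'a pmf \<Rightarrow> real \<Rightarrow> real" where
  "llr_mgf P Q0 Q1 s = (\<Sum>x\<in>UNIV. pmf P x * (pmf Q1 x / pmf Q0 x) powr s)"

lemma kappa_eq_ln_llr_mgf: "kappa P Q0 Q1 s = ln (llr_mgf P Q0 Q1 s)"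
  unfolding kappa_def llr_mgf_def ..

lemma llr_mgf_pos:
  assumes "set_pmf P = UNIV" "set_pmf Q0 = UNIV" "set_pmf Q1 = UNIV"
  shows "0 < llr_mgf P Q0 Q1 s"
  using assms unfolding llr_mgf_def by (intro sum_pos) (auto simp: pmf_eq_0_set_pmf pmf_positive_iff)

lemma llr_mgf_nonneg: "0 \<le> llr_mgf P Q0 Q1 s"
  unfolding llr_mgf_def by (intro sum_nonneg) simp

lemma llr_mgf_0:
  assumes "set_pmf Q0 = UNIV" "set_pmf Q1 = UNIV"
  shows "llr_mgf P Q0 Q1 0 = 1"
  using assms sum_pmf_eq_1[of UNIV P]
  by (simp add: llr_mgf_def pmf_eq_0_set_pmf)

lemma continuous_on_llr_mgf: "continuous_on A (llr_mgf P Q0 Q1)"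
proof -
  have "continuous_on A (\<lambda>s. c powr s)" for c :: real
    unfolding powr_def by (cases "c = 0") (auto intro!: continuous_intros)
  then show ?thesis
    unfolding llr_mgf_def by (intro continuous_on_sum continuous_on_mult continuous_on_const)
qed

lemma KL_diff_eq_expected_llr:
  assumes "set_pmf Q0 = UNIV" "set_pmf Q1 = UNIV"
  shows "KL P Q1 - KL P Q0 = (\<Sum>x\<in>UNIV. pmf P x * ln (pmf Q0 x / pmf Q1 x))"
  unfolding KL_def sum_subtractf[symmetric] using assms
  by (intro sum.cong) (auto simp: ln_div pmf_eq_0_set_pmf algebra_simps)

lemma has_real_derivative_llr_mgf_0:
  assumes "set_pmf Q0 = UNIV" "set_pmf Q1 = UNIV"
  shows "(llr_mgf P Q0 Q1 has_real_derivative KL P Q0 - KL P Q1) (at 0)"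
proof -
  have "(llr_mgf P Q0 Q1 has_real_derivative
          (\<Sum>x\<in>UNIV. pmf P x * ln (pmf Q1 x / pmf Q0 x))) (at 0)"
    unfolding llr_mgf_def using assms
    by (auto intro!: derivative_eq_intros simp: pmf_eq_0_set_pmf mult.commute)
  moreover have "(\<Sum>x\<in>UNIV. pmf P x * ln (pmf Q1 x / pmf Q0 x)) = KL P Q0 - KL P Q1"
    using KL_diff_eq_expected_llr[OF assms(2,1), of P] by simp
  ultimately show ?thesis by simp
qed

lemma llr_mgf_less_one:
  assumes "set_pmf Q0 = UNIV" "set_pmf Q1 = UNIV" and "KL P Q0 < KL P Q1"
  shows "\<exists>s>0. llr_mgf P Q0 Q1 s < 1"
proof -
  have "KL P Q0 - KL P Q1 < 0" using assms(3) by simp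
  from DERIV_neg_dec_right[OF has_real_derivative_llr_mgf_0[OF assms(1,2)] this]
  obtain e where "0 < e" and e: "\<And>h. 0 < h \<Longrightarrow> h < e \<Longrightarrow> llr_mgf P Q0 Q1 (0 + h) < llr_mgf P Q0 Q1 0"
    by blast
  have "llr_mgf P Q0 Q1 (e / 2) < 1"
    using e[of "e / 2"] \<open>0 < e\<close> llr_mgf_0[OF assms(1,2)] by simp
  then show ?thesis using \<open>0 < e\<close> by (intro exI[of _ "e / 2"]) simp
qed

lemma pmf_less_pmf_if_neq:
  fixes P Q :: "'a::finite pmf"
  assumes "P \<noteq> Q"
  shows "\<exists>x. pmf P x < pmf Q x"
proof (rule ccontr)
  assume "\<nexists>x. pmf P x < pmf Q x"
  then have le: "pmf Q x \<le> pmf P x" for x by (simp add: not_less)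
  have "pmf Q x = pmf P x" for x
    by (rule sum_mono_inv[of "pmf Q" UNIV "pmf P"]) (simp_all add: sum_pmf_eq_1 le)
  then have "P = Q" by (intro pmf_eqI) simp
  with assms show False ..
qed

lemma eventually_llr_mgf_ge_1:
  assumes "set_pmf P = UNIV" "set_pmf Q0 = UNIV" "set_pmf Q1 = UNIV" and "Q0 \<noteq> Q1"
  shows "\<forall>\<^sub>F s in at_top. 1 \<le> llr_mgf P Q0 Q1 s"
proof -
  obtain x0 where x0: "pmf Q0 x0 < pmf Q1 x0"
    using pmf_less_pmf_if_neq[OF assms(4)] by blast
  define r where "r = pmf Q1 x0 / pmf Q0 x0"
  have "1 < r" using x0 assms(2) by (simp add: r_def pmf_positive_iff)
  have "0 < pmf P x0" using assms(1) by (simp add: pmf_positive_iff)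
  have "filterlim (\<lambda>s. pmf P x0 * exp (s * ln r)) at_top at_top"
    using \<open>1 < r\<close> \<open>0 < pmf P x0\<close>
    by (intro filterlim_tendsto_pos_mult_at_top[OF tendsto_const] filterlim_compose[OF exp_at_top]
        filterlim_at_top_mult_tendsto_pos[OF tendsto_const] filterlim_ident) auto
  then have term_ge_1: "\<forall>\<^sub>F s in at_top. 1 \<le> pmf P x0 * r powr s"
    using \<open>1 < r\<close> by (simp add: powr_def filterlim_at_top)
  have le: "pmf P x0 * r powr s \<le> llr_mgf P Q0 Q1 s" for s
    unfolding llr_mgf_def r_def
    by (rule member_le_sum[where f="\<lambda>x. pmf P x * (pmf Q1 x / pmf Q0 x) powr s"]) auto
  from term_ge_1 show ?thesis
    by eventually_elim (rule order.trans[OF _ le])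
qed

lemma continuous_attains_inf_atLeast:
  fixes f :: "real \<Rightarrow> real"
  assumes "continuous_on {a..} f" and "\<forall>\<^sub>F s in at_top. f a \<le> f s"
  shows "\<exists>d\<ge>a. \<forall>s\<ge>a. f d \<le> f s"
proof -
  obtain S where S: "\<And>s. S \<le> s \<Longrightarrow> f a \<le> f s"
    using assms(2) by (auto simp: eventually_at_top_linorder)
  obtain d where d: "d \<in> {a..max a S}" "\<And>s. s \<in> {a..max a S} \<Longrightarrow> f d \<le> f s"
    using continuous_attains_inf[of "{a..max a S}" f] continuous_on_subset[OF assms(1)] by auto
  have "f d \<le> f s" if "a \<le> s" for s
    using d S[of s] that by (cases "s \<le> max a S") (auto intro: order.trans[OF d(2)[of a]])
  then show ?thesis using d(1) by auto
qed

lemma E0_eq_neg_kappa_if_minimal: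
  assumes "0 \<le> d" and min: "\<And>s. 0 \<le> s \<Longrightarrow> llr_mgf P Q0 Q1 d \<le> llr_mgf P Q0 Q1 s"
    and pos: "\<And>s. 0 < llr_mgf P Q0 Q1 s"
  shows "E0 P Q0 Q1 = - kappa P Q0 Q1 d"
  unfolding E0_def
proof (rule cSup_eq_maximum)
  show "- kappa P Q0 Q1 d \<in> (\<lambda>s. - kappa P Q0 Q1 s) ` {0..}" using assms(1) by auto
next
  fix y assume "y \<in> (\<lambda>s. - kappa P Q0 Q1 s) ` {0..}"
  then show "y \<le> - kappa P Q0 Q1 d"
    using min pos by (auto simp: kappa_eq_ln_llr_mgf)
qed

lemma E0_pos_and_attained:
  assumes "set_pmf P = UNIV" "set_pmf Q0 = UNIV" "set_pmf Q1 = UNIV" and "KL P Q0 < KL P Q1"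
  shows "0 < E0 P Q0 Q1 \<and> (\<exists>d\<ge>0. - kappa P Q0 Q1 d = E0 P Q0 Q1)"
proof -
  have pos: "0 < llr_mgf P Q0 Q1 s" for s using llr_mgf_pos[OF assms(1-3)] .
  have "Q0 \<noteq> Q1" using assms(4) by auto
  then have "\<forall>\<^sub>F s in at_top. llr_mgf P Q0 Q1 0 \<le> llr_mgf P Q0 Q1 s"
    using eventually_llr_mgf_ge_1[OF assms(1-3)] llr_mgf_0[OF assms(2,3)] by simp
  then obtain d where "0 \<le> d" and min: "\<And>s. 0 \<le> s \<Longrightarrow> llr_mgf P Q0 Q1 d \<le> llr_mgf P Q0 Q1 s"
    using continuous_attains_inf_atLeast[OF continuous_on_llr_mgf] by blast
  have E0: "E0 P Q0 Q1 = - kappa P Q0 Q1 d"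
    using E0_eq_neg_kappa_if_minimal[OF \<open>0 \<le> d\<close> min pos] .
  obtain s where "0 < s" "llr_mgf P Q0 Q1 s < 1"
    using llr_mgf_less_one[OF assms(2-4)] by blast
  then have "llr_mgf P Q0 Q1 d < 1" using min[of s] by simp
  then have "0 < E0 P Q0 Q1" using E0 pos[of d] by (simp add: kappa_eq_ln_llr_mgf)
  then show ?thesis using E0 \<open>0 \<le> d\<close> by auto
qed

lemma neg_kappa_maximizer_pos:
  assumes "set_pmf Q0 = UNIV" "set_pmf Q1 = UNIV"
    and "0 \<le> d" "- kappa P Q0 Q1 d = E0 P Q0 Q1" "0 < E0 P Q0 Q1"
  shows "0 < d"
proof -
  have "kappa P Q0 Q1 0 = 0"
    using llr_mgf_0[OF assms(1,2)] by (simp add: kappa_eq_ln_llr_mgf)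
  then show ?thesis using assms(3-5) by (cases "d = 0") auto
qed

lemma prob_space_iid: "prob_space (iid P)"
  unfolding iid_def by (intro prob_space_PiM prob_space_measure_pmf)

lemma measurable_llr_walk [measurable]: "llr_walk Q0 Q1 m \<in> borel_measurable (iid P)"
proof -
  have [measurable]: "pmf Q \<in> borel_measurable (measure_pmf P)" for Q :: "'a pmf" by simp
  show ?thesis unfolding llr_walk_def iid_def by measurable
qed

lemma nn_integral_iid_prod:
  fixes g :: "'a \<Rightarrow> ennreal"
  shows "(\<integral>\<^sup>+\<omega>. (\<Prod>i<m. g (\<omega> i)) \<partial>iid P) = (\<integral>\<^sup>+x. g x \<partial>measure_pmf P) ^ m"
proof -
  interpret product_prob_space "\<lambda>_::nat. measure_pmf P" UNIV
    by (simp add: product_prob_space_def product_sigma_finite_def prob_space_measure_pmf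
        product_prob_space_axioms_def prob_space_imp_sigma_finite)
  have restrict: "distr (iid P) (PiM {..<m} (\<lambda>_. measure_pmf P)) (\<lambda>\<omega>. restrict \<omega> {..<m})
      = PiM {..<m} (\<lambda>_. measure_pmf P)"
    unfolding iid_def by (rule distr_PiM_restrict_finite) auto
  have [measurable]: "g \<in> borel_measurable (count_space UNIV)" by simp
  have "(\<integral>\<^sup>+\<omega>. (\<Prod>i<m. g (\<omega> i)) \<partial>iid P)
      = (\<integral>\<^sup>+\<omega>. (\<Prod>i<m. g (\<omega> i))
           \<partial>distr (iid P) (PiM {..<m} (\<lambda>_. measure_pmf P)) (\<lambda>\<omega>. restrict \<omega> {..<m}))"
    by (subst nn_integral_distr) (auto simp: iid_def restrict intro!: nn_integral_cong, measurable)
  also have "\<dots> = (\<Prod>i<m. \<integral>\<^sup>+x. g x \<partial>measure_pmf P)"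
    unfolding restrict by (rule product_nn_integral_prod) auto
  finally show ?thesis by simp
qed

lemma measure_llr_walk_le:
  assumes "set_pmf Q0 = UNIV" "set_pmf Q1 = UNIV" and "0 < s"
  shows "measure (iid P) {\<omega> \<in> space (iid P). llr_walk Q0 Q1 m \<omega> \<le> \<gamma>}
    \<le> exp (s * \<gamma>) * llr_mgf P Q0 Q1 s ^ m"
proof -
  interpret prob_space "iid P" by (rule prob_space_iid)
  define g where "g x = (pmf Q1 x / pmf Q0 x) powr s" for x
  have exp_walk: "exp (- (s * llr_walk Q0 Q1 m \<omega>)) = (\<Prod>i<m. g (\<omega> i))" for \<omega>
    using assms(1,2)
    by (simp add: g_def llr_walk_def powr_def ln_div pmf_eq_0_set_pmf sum_distrib_left exp_sum
        flip: sum_negf) (rule prod.cong; simp add: algebra_simps)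
  have "(\<integral>\<^sup>+x. ennreal (g x) \<partial>measure_pmf P) = (\<Sum>x\<in>UNIV. ennreal (g x) * ennreal (pmf P x))"
    by (rule nn_integral_measure_pmf_support) auto
  also have "\<dots> = ennreal (llr_mgf P Q0 Q1 s)"
    unfolding llr_mgf_def g_def
    by (subst sum_ennreal[symmetric]) (auto simp: ennreal_mult' mult.commute)
  finally have mgf: "(\<integral>\<^sup>+x. ennreal (g x) \<partial>measure_pmf P) = ennreal (llr_mgf P Q0 Q1 s)" .
  have "emeasure (iid P) {\<omega> \<in> space (iid P). llr_walk Q0 Q1 m \<omega> \<le> \<gamma>}
      \<le> ennreal (exp (s * \<gamma>))
         * (\<integral>\<^sup>+\<omega>. ennreal (exp (- s * llr_walk Q0 Q1 m \<omega>)) * indicator (space (iid P)) \<omega> \<partial>iid P)"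
    using assms(3) by (intro Chernoff_ineq_nn_integral_le) auto
  also have "(\<integral>\<^sup>+\<omega>. ennreal (exp (- s * llr_walk Q0 Q1 m \<omega>)) * indicator (space (iid P)) \<omega> \<partial>iid P)
      = (\<integral>\<^sup>+\<omega>. (\<Prod>i<m. ennreal (g (\<omega> i))) \<partial>iid P)"
    by (intro nn_integral_cong) (simp add: exp_walk g_def prod_ennreal)
  also have "\<dots> = ennreal (llr_mgf P Q0 Q1 s ^ m)"
    using nn_integral_iid_prod[where g="\<lambda>x. ennreal (g x)" and m=m and P=P]
    by (simp add: mgf ennreal_power llr_mgf_nonneg)
  finally show ?thesis
    by (simp add: emeasure_eq_measure ennreal_mult[symmetric] llr_mgf_nonneg)
qed

lemma le_Least_iff:
  fixes P :: "'a::wellorder \<Rightarrow> bool"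
  assumes "\<exists>k. P k"
  shows "n \<le> Least P \<longleftrightarrow> (\<forall>k<n. \<not> P k)"
proof
  show "\<forall>k<n. \<not> P k" if "n \<le> Least P"
    using that by (meson not_less_Least order.strict_trans2)
next
  show "n \<le> Least P" if "\<forall>k<n. \<not> P k"
    using that LeastI_ex[OF assms] by (blast intro: leI)
qed

lemma le_first_passage_iff:
  "enat n \<le> first_passage Q0 Q1 \<gamma> \<omega> \<longleftrightarrow> (\<forall>k\<in>{1..<n}. llr_walk Q0 Q1 k \<omega> < \<gamma>)"
proof (cases "\<exists>k\<ge>1. \<gamma> \<le> llr_walk Q0 Q1 k \<omega>")
  case True
  then have "first_passage Q0 Q1 \<gamma> \<omega> = enat (LEAST k. 1 \<le> k \<and> \<gamma> \<le> llr_walk Q0 Q1 k \<omega>)"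
    unfolding first_passage_def by (simp only: if_P)
  then have "enat n \<le> first_passage Q0 Q1 \<gamma> \<omega>
      \<longleftrightarrow> (\<forall>k<n. \<not> (1 \<le> k \<and> \<gamma> \<le> llr_walk Q0 Q1 k \<omega>))"
    using le_Least_iff[of "\<lambda>k. 1 \<le> k \<and> \<gamma> \<le> llr_walk Q0 Q1 k \<omega>" n] True
    by (simp only: enat_ord_simps)
  also have "\<dots> \<longleftrightarrow> (\<forall>k\<in>{1..<n}. llr_walk Q0 Q1 k \<omega> < \<gamma>)"
    by force
  finally show ?thesis .
next
  case False
  then have "first_passage Q0 Q1 \<gamma> \<omega> = \<infinity>"
    unfolding first_passage_def by (simp only: if_not_P if_False)
  moreover have "llr_walk Q0 Q1 k \<omega> < \<gamma>" if "1 \<le> k" for k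
    using False that by (meson not_le)
  ultimately show ?thesis by simp
qed

lemma measure_le_first_passage_le:
  assumes "set_pmf Q0 = UNIV" "set_pmf Q1 = UNIV" and "0 < s" "0 \<le> \<gamma>"
  shows "measure (iid P) {\<omega> \<in> space (iid P). enat (Suc m) \<le> first_passage Q0 Q1 \<gamma> \<omega>}
    \<le> exp (s * \<gamma>) * llr_mgf P Q0 Q1 s ^ m"
proof -
  interpret prob_space "iid P" by (rule prob_space_iid)
  have "{\<omega> \<in> space (iid P). enat (Suc m) \<le> first_passage Q0 Q1 \<gamma> \<omega>}
      \<subseteq> {\<omega> \<in> space (iid P). llr_walk Q0 Q1 m \<omega> \<le> \<gamma>}"
    using assms(4) by (cases "m = 0") (auto simp: le_first_passage_iff llr_walk_def less_imp_le)
  then have "measure (iid P) {\<omega> \<in> space (iid P). enat (Suc m) \<le> first_passage Q0 Q1 \<gamma> \<omega>}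
      \<le> measure (iid P) {\<omega> \<in> space (iid P). llr_walk Q0 Q1 m \<omega> \<le> \<gamma>}"
    by (rule finite_measure_mono) measurable
  also have "\<dots> \<le> exp (s * \<gamma>) * llr_mgf P Q0 Q1 s ^ m"
    by (rule measure_llr_walk_le[OF assms(1-3)])
  finally show ?thesis .
qed

lemma measure_le_first_passage_le_exp_E0:
  assumes "set_pmf P = UNIV" "set_pmf Q0 = UNIV" "set_pmf Q1 = UNIV"
    and "0 < d" "- kappa P Q0 Q1 d = E0 P Q0 Q1" and "0 \<le> \<gamma>" "1 \<le> n"
  shows "measure (iid P) {\<omega> \<in> space (iid P). enat n \<le> first_passage Q0 Q1 \<gamma> \<omega>}
    \<le> exp (d * \<gamma>) * exp (- (real n - 1) * E0 P Q0 Q1)"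
proof -
  have "ln (llr_mgf P Q0 Q1 d) = - E0 P Q0 Q1"
    using assms(5) by (simp add: kappa_eq_ln_llr_mgf)
  then have mgf: "llr_mgf P Q0 Q1 d = exp (- E0 P Q0 Q1)"
    using llr_mgf_pos[OF assms(1-3), of d] by (metis exp_ln)
  obtain m where n: "n = Suc m" using assms(7) not0_implies_Suc by force
  show ?thesis
    using measure_le_first_passage_le[OF assms(2,3,4,6), where P=P and m=m]
    by (simp add: mgf n flip: exp_of_nat_mult)
qed

lemma eventually_le_first_passage:
  "\<forall>\<^sub>F \<gamma> in at_top. enat N \<le> first_passage Q0 Q1 \<gamma> \<omega>"
proof -
  define c where "c = Max ((\<lambda>k. llr_walk Q0 Q1 k \<omega>) ` {..<N})"
  have bound: "llr_walk Q0 Q1 k \<omega> \<le> c" if "k < N" for k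
    unfolding c_def using that by (intro Max_ge) auto
  have passage: "enat N \<le> first_passage Q0 Q1 \<gamma> \<omega>" if "c < \<gamma>" for \<gamma>
    unfolding le_first_passage_iff
  proof
    fix k assume "k \<in> {1..<N}"
    then have "llr_walk Q0 Q1 k \<omega> \<le> c" by (intro bound) simp
    with that show "llr_walk Q0 Q1 k \<omega> < \<gamma>" by simp
  qed
  have "\<forall>\<^sub>F \<gamma> in at_top. c < \<gamma>" by (rule eventually_gt_at_top)
  then show ?thesis by eventually_elim (rule passage)
qed

theorem lemma4:
  fixes P0 P1 Q0 Q1 :: "'a::finite pmf"
  assumes "set_pmf P0 = UNIV" "set_pmf P1 = UNIV" "set_pmf Q0 = UNIV" "set_pmf Q1 = UNIV"
    and "0 < KL P0 Q1 - KL P0 Q0"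
    and "0 < KL P1 Q0 - KL P1 Q1"
  shows "E0 P0 Q0 Q1 > 0
    \<and> (\<exists>d\<ge>0. - kappa P0 Q0 Q1 d = E0 P0 Q0 Q1)
    \<and> (\<forall>d\<ge>0. - kappa P0 Q0 Q1 d = E0 P0 Q0 Q1 \<longrightarrow>
         d > 0 \<and>
         (\<forall>\<gamma>>0. \<forall>n\<ge>1.
            measure (iid P0) {\<omega> \<in> space (iid P0). enat n \<le> first_passage Q0 Q1 \<gamma> \<omega>}
              \<le> exp (d * \<gamma>) * exp (- (real n - 1) * E0 P0 Q0 Q1)))
    \<and> (AE \<omega> in iid P0. \<forall>N::nat. eventually (\<lambda>\<gamma>. enat N \<le> first_passage Q0 Q1 \<gamma> \<omega>) at_top)"
proof -
  have "KL P0 Q0 < KL P0 Q1" using assms(5) by simp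
  then have "0 < E0 P0 Q0 Q1" and "\<exists>d\<ge>0. - kappa P0 Q0 Q1 d = E0 P0 Q0 Q1"
    using E0_pos_and_attained[OF assms(1,3,4)] by blast+
  moreover have "0 < d \<and> (\<forall>\<gamma>>0. \<forall>n\<ge>1.
      measure (iid P0) {\<omega> \<in> space (iid P0). enat n \<le> first_passage Q0 Q1 \<gamma> \<omega>}
        \<le> exp (d * \<gamma>) * exp (- (real n - 1) * E0 P0 Q0 Q1))"
    if "0 \<le> d" "- kappa P0 Q0 Q1 d = E0 P0 Q0 Q1" for d
  proof -
    have "0 < d" using neg_kappa_maximizer_pos[OF assms(3,4) that \<open>0 < E0 P0 Q0 Q1\<close>] .
    then show ?thesis
      using measure_le_first_passage_le_exp_E0[OF assms(1,3,4) _ that(2)] by auto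
  qed
  moreover have "AE \<omega> in iid P0. \<forall>N::nat. eventually (\<lambda>\<gamma>. enat N \<le> first_passage Q0 Q1 \<gamma> \<omega>) at_top"
    by (intro AE_I2 allI eventually_le_first_passage)
  ultimately show ?thesis by blast
qed

end
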